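(* There exists a $C^2$ convex function $f:\mathbb{R}^2\to\mathbb{R}$ with $\min f=0$, whose set of minimizers is compact with nonempty interior, and which does not satisfy the Kurdyka–Łojasiewicz inequality: for each $r>0$ and each $\varphi\in\mathcal{K}(0,r)$, $$\inf\{\|\nabla(\varphi\circ f)(x)\|:x\in[0<f<r]\}=0.$$
   Context: $\mathcal{K}(0,r)$: functions $\varphi\in C([0,r))\cap C^1(0,r)$ with $\varphi(0)=0$ and $\varphi'(s)>0$ for all $s\in(0,r)$. $[0<f<r]=\{x\in\mathbb{R}^2:0<f(x)<r\}$. *)

theory Defs
  imports "HOL-Analysis.Analysis"
begin

definition grad :: "(real^2 \<Rightarrow> real) \<Rightarrow> real^2 \<Rightarrow> real^2" where
  "grad F x = (THE g. (F has_derivative (\<lambda>h. g \<bullet> h)) (at x))"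

definition C2_on_plane :: "(real^2 \<Rightarrow> real) \<Rightarrow> bool" where
  "C2_on_plane f \<longleftrightarrow>
     (\<exists>g H. (\<forall>x. (f has_derivative (\<lambda>h. g x \<bullet> h)) (at x)) \<and>
            (\<forall>x. (g has_derivative blinfun_apply (H x)) (at x)) \<and>
            continuous_on UNIV H)"

definition Kclass :: "real \<Rightarrow> (real \<Rightarrow> real) \<Rightarrow> bool" where
  "Kclass r \<phi> \<longleftrightarrow>
     continuous_on {0..<r} \<phi> \<and> \<phi> 0 = 0 \<and>
     (\<exists>\<phi>'. (\<forall>s\<in>{0<..<r}. (\<phi> has_real_derivative \<phi>' s) (at s)) \<and>
           continuous_on {0<..<r} \<phi>' \<and>
           (\<forall>s\<in>{0<..<r}. \<phi>' s > 0))"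

end

theory Submission
  imports Defs
begin

text \<open>The function is a convergent sum of ridge functions
  f z = (SUM k. w k * psi (u k \<bullet> z - beta k)) with psi t = (max t 0)^3, rapidly decaying weights w,
  and unit normals u k that sweep the circle ever more finely: the d-th layer consists of d + 1
  equally spaced directions, all with offset beta = 1 + 1/(d + 2). Each term is convex and C^2,
  and the zero set of f is the intersection of the half-planes u k \<bullet> z \<le> beta k, which contains
  the unit disc and is bounded.

  On a short segment of the ray through u k just beyond the line u k \<bullet> z = beta k, all earlier
  ridges vanish (the earlier lines lie further out in that direction) and the later ones are
  negligible, so 0 < f \<le> w k there and the gradient of f makes an angle of less than 60 degrees
  with u k. Moreover f at the end of segment k + 1 is below f at the start of segment k. If
  |grad (phi o f)| \<ge> c > 0 on [0 < f < r], then phi o f would increase by at least c/2 times the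
  length of each segment, which is of order 1/k; telescoping along the descending segments would
  then bound the harmonic series.\<close>

section \<open>Termwise differentiation of series\<close>

lemma eventually_norm_suminf_tail_le:
  fixes D :: "nat \<Rightarrow> 'a \<Rightarrow> 'c::real_normed_vector \<Rightarrow> 'b::banach"
  assumes "summable M" and bound: "\<And>k y h. y \<in> S \<Longrightarrow> norm (D k y h) \<le> M k * norm h" and "e > 0"
  shows "\<forall>\<^sub>F n in sequentially. \<forall>y\<in>S. \<forall>h. norm ((\<Sum>i<n. D i y h) - (\<Sum>k. D k y h)) \<le> e * norm h"
proof -
  obtain N where N: "\<And>n. n \<ge> N \<Longrightarrow> norm (\<Sum>i. M (i + n)) < e"
    using suminf_exist_split[OF \<open>e > 0\<close> \<open>summable M\<close>] by blast
  show ?thesis unfolding eventually_sequentially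
  proof (intro exI allI impI ballI)
    fix n y h assume "N \<le> n" "y \<in> S"
    have tail: "summable (\<lambda>i. M (i + n))" using \<open>summable M\<close> by (rule summable_ignore_initial_segment)
    have summable_D: "summable (\<lambda>k. norm (D (k + m) y h))" for m
      by (rule summable_comparison_test'[where g="\<lambda>k. M (k + m) * norm h" and N=0])
         (use \<open>summable M\<close> bound \<open>y \<in> S\<close> in \<open>auto intro: summable_mult2 summable_ignore_initial_segment\<close>)
    have "(\<Sum>k. D k y h) = (\<Sum>i. D (i + n) y h) + (\<Sum>i<n. D i y h)"
      using summable_D[of 0] by (intro suminf_split_initial_segment) (simp add: summable_norm_cancel)
    hence "norm ((\<Sum>i<n. D i y h) - (\<Sum>k. D k y h)) = norm (\<Sum>i. D (i + n) y h)"
      by (simp add: norm_minus_commute)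
    also have "\<dots> \<le> (\<Sum>i. norm (D (i + n) y h))" by (rule summable_norm[OF summable_D])
    also have "\<dots> \<le> (\<Sum>i. M (i + n) * norm h)"
      by (rule suminf_le) (use bound \<open>y \<in> S\<close> summable_D tail in \<open>auto intro: summable_mult2\<close>)
    also have "\<dots> = (\<Sum>i. M (i + n)) * norm h" by (rule suminf_mult2[OF tail, symmetric])
    also have "\<dots> \<le> e * norm h" using N[OF \<open>N \<le> n\<close>] by (intro mult_right_mono) auto
    finally show "norm ((\<Sum>i<n. D i y h) - (\<Sum>k. D k y h)) \<le> e * norm h" .
  qed
qed

lemma has_derivative_suminf:
  fixes F :: "nat \<Rightarrow> 'a::real_normed_vector \<Rightarrow> 'b::banach" and D :: "nat \<Rightarrow> 'a \<Rightarrow> 'a \<Rightarrow> 'b"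
  assumes deriv: "\<And>k z. (F k has_derivative D k z) (at z)"
    and dominated: "\<And>R. \<exists>M. summable M \<and> (\<forall>k z. norm z \<le> R \<longrightarrow>
                        norm (F k z) \<le> M k \<and> (\<forall>h. norm (D k z h) \<le> M k * norm h))"
  shows "((\<lambda>z. \<Sum>k. F k z) has_derivative (\<lambda>h. \<Sum>k. D k z h)) (at z)"
proof -
  define S where "S = ball (0::'a) (norm z + 1)"
  obtain M where M: "summable M"
    and M_bound: "\<And>k y. y \<in> S \<Longrightarrow> norm (F k y) \<le> M k \<and> (\<forall>h. norm (D k y h) \<le> M k * norm h)"
    using dominated[of "norm z + 1"] by (auto simp: S_def)
  have z: "z \<in> S" "open S" "convex S" by (simp_all add: S_def)
  have summable_F: "summable (\<lambda>k. F k y)" if "y \<in> S" for y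
    by (rule summable_comparison_test'[where g=M and N=0]) (use M M_bound that in auto)
  have uniform: "\<forall>\<^sub>F n in sequentially. \<forall>y\<in>S. \<forall>h.
                   norm ((\<Sum>i<n. D i y h) - (\<Sum>k. D k y h)) \<le> e * norm h" if "e > 0" for e
    by (rule eventually_norm_suminf_tail_le[OF M _ that]) (use M_bound in blast)
  have "\<exists>g. \<forall>y\<in>S. (\<lambda>k. F k y) sums g y \<and>
                 (g has_derivative (\<lambda>h. \<Sum>k. D k y h)) (at y within S)"
    by (rule has_derivative_series[where x=z])
       (use z summable_F uniform in \<open>auto intro: has_derivative_at_withinI[OF deriv]\<close>)
  then obtain g where g: "\<And>y. y \<in> S \<Longrightarrow> (\<lambda>k. F k y) sums g y \<and>
                        (g has_derivative (\<lambda>h. \<Sum>k. D k y h)) (at y within S)"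
    by blast
  have "(g has_derivative (\<lambda>h. \<Sum>k. D k z h)) (at z)"
    using g[OF z(1)] at_within_open[OF z(1,2)] by simp
  thus ?thesis
    by (rule has_derivative_transform_within_open[OF _ z(2,1)]) (use g sums_unique in auto)
qed

section \<open>Sums of ridge functions\<close>

definition pcube :: "real \<Rightarrow> real" where "pcube t = (max t 0) ^ 3"
definition pcube1 :: "real \<Rightarrow> real" where "pcube1 t = 3 * (max t 0) ^ 2"
definition pcube2 :: "real \<Rightarrow> real" where "pcube2 t = 6 * max t 0"

lemma has_real_derivative_zero_if_square_bound:
  fixes g :: "real \<Rightarrow> real"
  assumes "g 0 = 0" and bound: "\<And>t. \<bar>t\<bar> \<le> 1 \<Longrightarrow> \<bar>g t\<bar> \<le> K * t\<^sup>2"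
  shows "(g has_real_derivative 0) (at 0)"
proof -
  have "\<forall>\<^sub>F t in at (0::real). \<bar>t\<bar> < 1"
    using eventually_at_ball[of 1 "0::real" UNIV] by (simp add: dist_real_def)
  hence "\<forall>\<^sub>F t in at 0. norm ((g t - g 0) / (t - 0)) \<le> norm t * K"
  proof eventually_elim
    case (elim t)
    show ?case
    proof (cases "t = 0")
      case False
      have "\<bar>g t\<bar> \<le> K * (\<bar>t\<bar> * \<bar>t\<bar>)"
        using bound elim by (simp add: power2_eq_square)
      hence "\<bar>g t\<bar> / \<bar>t\<bar> \<le> K * (\<bar>t\<bar> * \<bar>t\<bar>) / \<bar>t\<bar>"
        by (rule divide_right_mono) simp
      also have "\<dots> = \<bar>t\<bar> * K" using False by (simp del: abs_mult_self_eq)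
      finally show ?thesis using \<open>g 0 = 0\<close> False by simp
    qed (use \<open>g 0 = 0\<close> in simp)
  qed
  hence "((\<lambda>t. (g t - g 0) / (t - 0)) \<longlongrightarrow> 0) (at 0)"
    by (rule tendsto_0_le[OF tendsto_ident_at])
  thus ?thesis by (simp add: has_field_derivative_iff)
qed

lemma has_real_derivative_pcube: "(pcube has_real_derivative pcube1 t) (at t)"
proof -
  consider "t > 0" | "t < 0" | "t = 0" by linarith
  thus ?thesis
  proof cases
    case 1
    have "((\<lambda>x. x ^ 3) has_real_derivative 3 * t\<^sup>2) (at t)" by (auto intro!: derivative_eq_intros)
    hence "(pcube has_real_derivative 3 * t\<^sup>2) (at t)"
      by (rule has_field_derivative_transform_within_open[where S="{0<..}"])
         (use 1 in \<open>auto simp: pcube_def\<close>)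
    thus ?thesis using 1 by (simp add: pcube1_def)
  next
    case 2
    have "((\<lambda>x. 0) has_real_derivative 0) (at t)" by simp
    hence "(pcube has_real_derivative 0) (at t)"
      by (rule has_field_derivative_transform_within_open[where S="{..<0}"])
         (use 2 in \<open>auto simp: pcube_def\<close>)
    thus ?thesis using 2 by (simp add: pcube1_def)
  next
    case 3
    have "(pcube has_real_derivative 0) (at 0)"
    proof (rule has_real_derivative_zero_if_square_bound[where K=1])
      fix x :: real assume x: "\<bar>x\<bar> \<le> 1"
      have "\<bar>pcube x\<bar> \<le> \<bar>x\<bar> ^ 3" unfolding pcube_def by (simp add: power_mono)
      also have "\<dots> = \<bar>x\<bar> * x\<^sup>2" by (simp add: power3_eq_cube power2_eq_square)
      also have "\<dots> \<le> 1 * x\<^sup>2" using x by (intro mult_right_mono) auto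
      finally show "\<bar>pcube x\<bar> \<le> 1 * x\<^sup>2" .
    qed (simp add: pcube_def)
    thus ?thesis using 3 by (simp add: pcube1_def)
  qed
qed

lemma has_real_derivative_pcube1: "(pcube1 has_real_derivative pcube2 t) (at t)"
proof -
  consider "t > 0" | "t < 0" | "t = 0" by linarith
  thus ?thesis
  proof cases
    case 1
    have "((\<lambda>x. 3 * x\<^sup>2) has_real_derivative 6 * t) (at t)" by (auto intro!: derivative_eq_intros)
    hence "(pcube1 has_real_derivative 6 * t) (at t)"
      by (rule has_field_derivative_transform_within_open[where S="{0<..}"])
         (use 1 in \<open>auto simp: pcube1_def\<close>)
    thus ?thesis using 1 by (simp add: pcube2_def)
  next
    case 2
    have "((\<lambda>x. 0) has_real_derivative 0) (at t)" by simp
    hence "(pcube1 has_real_derivative 0) (at t)"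
      by (rule has_field_derivative_transform_within_open[where S="{..<0}"])
         (use 2 in \<open>auto simp: pcube1_def\<close>)
    thus ?thesis using 2 by (simp add: pcube2_def)
  next
    case 3
    have "(pcube1 has_real_derivative 0) (at 0)"
    proof (rule has_real_derivative_zero_if_square_bound[where K=3])
      fix x :: real
      have "(max x 0)\<^sup>2 \<le> x\<^sup>2" by (cases "x \<ge> 0") (auto simp: max_def)
      thus "\<bar>pcube1 x\<bar> \<le> 3 * x\<^sup>2" by (simp add: pcube1_def)
    qed (simp add: pcube1_def)
    thus ?thesis using 3 by (simp add: pcube2_def)
  qed
qed

lemma pcube_nonneg: "0 \<le> pcube t" and pcube1_nonneg: "0 \<le> pcube1 t"
  and pcube2_nonneg: "0 \<le> pcube2 t"
  by (simp_all add: pcube_def pcube1_def pcube2_def)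

lemma pcube_eq_0_iff: "pcube t = 0 \<longleftrightarrow> t \<le> 0"
  by (simp add: pcube_def max_def)

lemma pcube1_eq_0: "t \<le> 0 \<Longrightarrow> pcube1 t = 0"
  by (simp add: pcube1_def)

lemma pcube_pos: "0 < t \<Longrightarrow> pcube t = t ^ 3" and pcube1_pos: "0 < t \<Longrightarrow> pcube1 t = 3 * t\<^sup>2"
  by (simp_all add: pcube_def pcube1_def)

lemma convex_on_pcube: "convex_on UNIV pcube"
  by (rule convex_on_realI[where f'=pcube1])
     (use has_real_derivative_pcube in \<open>auto simp: pcube1_def power_mono\<close>)

lemma pcube_le: "\<bar>t\<bar> \<le> A \<Longrightarrow> pcube t \<le> A ^ 3"
  and pcube1_le: "\<bar>t\<bar> \<le> A \<Longrightarrow> pcube1 t \<le> 3 * A\<^sup>2"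
  and pcube2_le: "\<bar>t\<bar> \<le> A \<Longrightarrow> pcube2 t \<le> 6 * A"
  by (auto simp: pcube_def pcube1_def pcube2_def intro!: power_mono)

lemma continuous_on_pcube2: "continuous_on S pcube2"
  unfolding pcube2_def by (intro continuous_intros)

definition rank_one :: "'a::real_inner \<Rightarrow> 'a \<Rightarrow>\<^sub>L 'a" where
  "rank_one v = blinfun_scaleR_left v o\<^sub>L blinfun_inner_left v"

lemma rank_one_apply: "blinfun_apply (rank_one v) h = (v \<bullet> h) *\<^sub>R v"
  by (simp add: rank_one_def inner_commute)

lemma norm_rank_one_le: "norm v \<le> 1 \<Longrightarrow> norm (rank_one v) \<le> 1"
proof (rule norm_blinfun_bound)
  fix h assume "norm v \<le> 1"
  have "norm ((v \<bullet> h) *\<^sub>R v) = \<bar>v \<bullet> h\<bar> * norm v" by simp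
  also have "\<dots> \<le> (norm v * norm h) * 1"
    using Cauchy_Schwarz_ineq2[of v h] \<open>norm v \<le> 1\<close> by (intro mult_mono) auto
  also have "\<dots> \<le> 1 * norm h" using \<open>norm v \<le> 1\<close> by (simp add: mult_left_le_one_le)
  finally show "norm (blinfun_apply (rank_one v) h) \<le> 1 * norm h" by (simp add: rank_one_apply)
qed simp

definition ridge_sum ::
    "(nat \<Rightarrow> real) \<Rightarrow> (nat \<Rightarrow> 'a::real_inner) \<Rightarrow> (nat \<Rightarrow> real) \<Rightarrow> 'a \<Rightarrow> real" where
  "ridge_sum eta u beta z = (\<Sum>k. eta k * pcube (u k \<bullet> z - beta k))"

definition ridge_grad ::
    "(nat \<Rightarrow> real) \<Rightarrow> (nat \<Rightarrow> 'a::real_inner) \<Rightarrow> (nat \<Rightarrow> real) \<Rightarrow> 'a \<Rightarrow> 'a" where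
  "ridge_grad eta u beta z = (\<Sum>k. (eta k * pcube1 (u k \<bullet> z - beta k)) *\<^sub>R u k)"

definition ridge_hess ::
    "(nat \<Rightarrow> real) \<Rightarrow> (nat \<Rightarrow> 'a::real_inner) \<Rightarrow> (nat \<Rightarrow> real) \<Rightarrow> 'a \<Rightarrow> 'a \<Rightarrow>\<^sub>L 'a" where
  "ridge_hess eta u beta z = (\<Sum>k. (eta k * pcube2 (u k \<bullet> z - beta k)) *\<^sub>R rank_one (u k))"

lemma has_derivative_ridge_function:
  assumes "(g has_real_derivative d) (at (v \<bullet> z - b))"
  shows "((\<lambda>z. g (v \<bullet> z - b)) has_derivative (\<lambda>h. d * (v \<bullet> h))) (at z)"
proof -
  have "((\<lambda>z. v \<bullet> z - b) has_derivative (\<lambda>h. v \<bullet> h)) (at z)"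
    by (auto intro!: derivative_eq_intros)
  from diff_chain_at[OF this assms[THEN has_field_derivative_imp_has_derivative]]
  show ?thesis by (simp add: o_def)
qed

locale ridge_series =
  fixes eta :: "nat \<Rightarrow> real" and u :: "nat \<Rightarrow> 'a::{real_inner,banach}" and beta :: "nat \<Rightarrow> real"
    and B :: real
  assumes eta_nonneg: "\<And>k. 0 \<le> eta k" and summable_eta: "summable eta"
    and norm_u_le: "\<And>k. norm (u k) \<le> 1" and abs_beta_le: "\<And>k. \<bar>beta k\<bar> \<le> B"
begin

lemma B_nonneg: "0 \<le> B"
  using abs_beta_le[of 0] by linarith

lemma abs_arg_le: "norm z \<le> R \<Longrightarrow> \<bar>u k \<bullet> z - beta k\<bar> \<le> \<bar>R\<bar> + B"
proof -
  assume "norm z \<le> R"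
  have "\<bar>u k \<bullet> z\<bar> \<le> norm (u k) * norm z" by (rule Cauchy_Schwarz_ineq2)
  also have "\<dots> \<le> 1 * \<bar>R\<bar>" using norm_u_le[of k] \<open>norm z \<le> R\<close> by (intro mult_mono) auto
  finally show ?thesis using abs_beta_le[of k] by linarith
qed

lemma abs_inner_u_le: "\<bar>u k \<bullet> h\<bar> \<le> norm h"
  using Cauchy_Schwarz_ineq2[of "u k" h] norm_u_le[of k] mult_right_mono[of "norm (u k)" 1 "norm h"]
  by simp

lemma summable_if_le_eta:
  fixes X :: "nat \<Rightarrow> 'b::banach"
  assumes "\<And>k. norm (X k) \<le> eta k * C"
  shows "summable X"
  by (rule summable_comparison_test'[where g="\<lambda>k. eta k * C" and N=0])
     (use assms summable_eta in \<open>auto intro: summable_mult2\<close>)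

lemma norm_terms_le:
  assumes "norm z \<le> R"
  shows "norm (eta k * pcube (u k \<bullet> z - beta k)) \<le> eta k * (\<bar>R\<bar> + B) ^ 3"
    and "norm ((eta k * pcube1 (u k \<bullet> z - beta k)) *\<^sub>R u k) \<le> eta k * (3 * (\<bar>R\<bar> + B)\<^sup>2)"
    and "norm ((eta k * pcube2 (u k \<bullet> z - beta k)) *\<^sub>R rank_one (u k)) \<le> eta k * (6 * (\<bar>R\<bar> + B))"
proof -
  note arg = abs_arg_le[OF assms, of k]
  show "norm (eta k * pcube (u k \<bullet> z - beta k)) \<le> eta k * (\<bar>R\<bar> + B) ^ 3"
    using eta_nonneg[of k] pcube_le[OF arg] pcube_nonneg
    by (simp add: abs_mult mult_left_mono)
  have "eta k * pcube1 (u k \<bullet> z - beta k) * norm (u k) \<le> eta k * (3 * (\<bar>R\<bar> + B)\<^sup>2) * 1"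
    using eta_nonneg[of k] pcube1_le[OF arg] pcube1_nonneg norm_u_le[of k] B_nonneg
    by (intro mult_mono mult_left_mono) auto
  thus "norm ((eta k * pcube1 (u k \<bullet> z - beta k)) *\<^sub>R u k) \<le> eta k * (3 * (\<bar>R\<bar> + B)\<^sup>2)"
    using eta_nonneg[of k] pcube1_nonneg by (simp add: abs_mult)
  have "eta k * pcube2 (u k \<bullet> z - beta k) * norm (rank_one (u k)) \<le> eta k * (6 * (\<bar>R\<bar> + B)) * 1"
    using eta_nonneg[of k] pcube2_le[OF arg] pcube2_nonneg norm_rank_one_le[OF norm_u_le] B_nonneg
    by (intro mult_mono mult_left_mono) auto
  thus "norm ((eta k * pcube2 (u k \<bullet> z - beta k)) *\<^sub>R rank_one (u k)) \<le> eta k * (6 * (\<bar>R\<bar> + B))"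
    using eta_nonneg[of k] pcube2_nonneg by (simp add: abs_mult)
qed

lemma summable_ridge_terms: "summable (\<lambda>k. eta k * pcube (u k \<bullet> z - beta k))"
  by (rule summable_if_le_eta) (rule norm_terms_le(1)[OF order_refl])

lemma summable_ridge_grad_terms: "summable (\<lambda>k. (eta k * pcube1 (u k \<bullet> z - beta k)) *\<^sub>R u k)"
  by (rule summable_if_le_eta) (rule norm_terms_le(2)[OF order_refl])

lemma summable_ridge_hess_terms:
  "summable (\<lambda>k. (eta k * pcube2 (u k \<bullet> z - beta k)) *\<^sub>R rank_one (u k))"
  by (rule summable_if_le_eta) (rule norm_terms_le(3)[OF order_refl])

lemma has_derivative_ridge_sum: "(ridge_sum eta u beta has_derivative (\<lambda>h. ridge_grad eta u beta z \<bullet> h)) (at z)"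
proof -
  have "((\<lambda>z. \<Sum>k. eta k * pcube (u k \<bullet> z - beta k)) has_derivative
        (\<lambda>h. \<Sum>k. eta k * pcube1 (u k \<bullet> z - beta k) * (u k \<bullet> h))) (at z)"
  proof (rule has_derivative_suminf)
    show "((\<lambda>z. eta k * pcube (u k \<bullet> z - beta k)) has_derivative
           (\<lambda>h. eta k * pcube1 (u k \<bullet> z - beta k) * (u k \<bullet> h))) (at z)" for k z
      using has_derivative_mult_right[OF has_derivative_ridge_function[OF has_real_derivative_pcube], of "eta k"]
      by (simp add: mult.assoc)
    fix R :: real
    let ?C = "(\<bar>R\<bar> + B) ^ 3 + 3 * (\<bar>R\<bar> + B)\<^sup>2"
    show "\<exists>M. summable M \<and> (\<forall>k z. norm z \<le> R \<longrightarrow> norm (eta k * pcube (u k \<bullet> z - beta k)) \<le> M k \<and>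
             (\<forall>h. norm (eta k * pcube1 (u k \<bullet> z - beta k) * (u k \<bullet> h)) \<le> M k * norm h))"
    proof (intro exI conjI allI impI)
      show "summable (\<lambda>k. eta k * ?C)" by (intro summable_mult2 summable_eta)
      fix k z h assume z: "norm (z::'a) \<le> R"
      note arg = abs_arg_le[OF z, of k]
      have "0 \<le> (\<bar>R\<bar> + B) ^ 3" "0 \<le> 3 * (\<bar>R\<bar> + B)\<^sup>2" using B_nonneg by auto
      hence "pcube (u k \<bullet> z - beta k) \<le> ?C" "pcube1 (u k \<bullet> z - beta k) \<le> ?C" "0 \<le> ?C"
        using pcube_le[OF arg] pcube1_le[OF arg] by linarith+
      hence bounds: "eta k * pcube (u k \<bullet> z - beta k) \<le> eta k * ?C"
          "eta k * pcube1 (u k \<bullet> z - beta k) * \<bar>u k \<bullet> h\<bar> \<le> eta k * ?C * norm h"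
        using eta_nonneg[of k] abs_inner_u_le[of k h] pcube1_nonneg
        by (auto intro!: mult_mono mult_left_mono)
      thus "norm (eta k * pcube (u k \<bullet> z - beta k)) \<le> eta k * ?C"
        "norm (eta k * pcube1 (u k \<bullet> z - beta k) * (u k \<bullet> h)) \<le> eta k * ?C * norm h"
        using eta_nonneg[of k] pcube_nonneg pcube1_nonneg by (simp_all add: abs_mult)
    qed
  qed
  moreover have "(\<Sum>k. eta k * pcube1 (u k \<bullet> z - beta k) * (u k \<bullet> h)) = ridge_grad eta u beta z \<bullet> h" for h
    unfolding ridge_grad_def
    by (subst bounded_linear.suminf[OF bounded_linear_inner_left summable_ridge_grad_terms]) simp
  ultimately show ?thesis by (simp add: ridge_sum_def[abs_def])
qed

lemma has_derivative_ridge_grad: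
  "(ridge_grad eta u beta has_derivative blinfun_apply (ridge_hess eta u beta z)) (at z)"
proof -
  have "((\<lambda>z. \<Sum>k. (eta k * pcube1 (u k \<bullet> z - beta k)) *\<^sub>R u k) has_derivative
        (\<lambda>h. \<Sum>k. (eta k * pcube2 (u k \<bullet> z - beta k) * (u k \<bullet> h)) *\<^sub>R u k)) (at z)"
  proof (rule has_derivative_suminf)
    show "((\<lambda>z. (eta k * pcube1 (u k \<bullet> z - beta k)) *\<^sub>R u k) has_derivative
           (\<lambda>h. (eta k * pcube2 (u k \<bullet> z - beta k) * (u k \<bullet> h)) *\<^sub>R u k)) (at z)" for k z
      using has_derivative_scaleR_left[OF has_derivative_mult_right[OF
              has_derivative_ridge_function[OF has_real_derivative_pcube1]], of "eta k" "u k"]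
      by (simp add: mult.assoc)
    fix R :: real
    let ?C = "3 * (\<bar>R\<bar> + B)\<^sup>2 + 6 * (\<bar>R\<bar> + B)"
    show "\<exists>M. summable M \<and> (\<forall>k z. norm z \<le> R \<longrightarrow>
             norm ((eta k * pcube1 (u k \<bullet> z - beta k)) *\<^sub>R u k) \<le> M k \<and>
             (\<forall>h. norm ((eta k * pcube2 (u k \<bullet> z - beta k) * (u k \<bullet> h)) *\<^sub>R u k) \<le> M k * norm h))"
    proof (intro exI conjI allI impI)
      show "summable (\<lambda>k. eta k * ?C)" by (intro summable_mult2 summable_eta)
      fix k z h assume z: "norm (z::'a) \<le> R"
      note arg = abs_arg_le[OF z, of k]
      have "0 \<le> 3 * (\<bar>R\<bar> + B)\<^sup>2" "0 \<le> 6 * (\<bar>R\<bar> + B)" using B_nonneg by auto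
      hence "pcube1 (u k \<bullet> z - beta k) \<le> ?C" "pcube2 (u k \<bullet> z - beta k) \<le> ?C" "0 \<le> ?C"
        using pcube1_le[OF arg] pcube2_le[OF arg] by linarith+
      hence C: "eta k * pcube1 (u k \<bullet> z - beta k) \<le> eta k * ?C"
          "eta k * pcube2 (u k \<bullet> z - beta k) \<le> eta k * ?C" "0 \<le> eta k * ?C"
        using eta_nonneg[of k] by (auto intro: mult_left_mono)
      have "eta k * pcube1 (u k \<bullet> z - beta k) * norm (u k) \<le> eta k * ?C * 1"
        using mult_mono[OF C(1) norm_u_le[of k]] C(3) by simp
      moreover have "eta k * pcube2 (u k \<bullet> z - beta k) * \<bar>u k \<bullet> h\<bar> * norm (u k) \<le> eta k * ?C * norm h * 1"
        using mult_mono[OF mult_mono[OF C(2) abs_inner_u_le[of k h]] norm_u_le[of k]] C(3)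
        by simp
      ultimately show "norm ((eta k * pcube1 (u k \<bullet> z - beta k)) *\<^sub>R u k) \<le> eta k * ?C"
        "norm ((eta k * pcube2 (u k \<bullet> z - beta k) * (u k \<bullet> h)) *\<^sub>R u k) \<le> eta k * ?C * norm h"
        using eta_nonneg[of k] pcube1_nonneg pcube2_nonneg by (simp_all add: abs_mult)
    qed
  qed
  moreover have "(\<Sum>k. (eta k * pcube2 (u k \<bullet> z - beta k) * (u k \<bullet> h)) *\<^sub>R u k)
                 = blinfun_apply (ridge_hess eta u beta z) h" for h
    unfolding ridge_hess_def
    by (subst bounded_linear.suminf[OF bounded_linear_apply_blinfun summable_ridge_hess_terms])
       (simp add: rank_one_apply blinfun.scaleR_left)
  ultimately show ?thesis by (simp add: ridge_grad_def[abs_def])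
qed

lemma continuous_on_ridge_hess: "continuous_on UNIV (ridge_hess eta u beta)"
proof -
  have "continuous_on (cball 0 R) (ridge_hess eta u beta)" for R
  proof -
    have "uniform_limit (cball 0 R)
            (\<lambda>n z. \<Sum>k<n. (eta k * pcube2 (u k \<bullet> z - beta k)) *\<^sub>R rank_one (u k))
            (ridge_hess eta u beta) sequentially"
      unfolding ridge_hess_def[abs_def]
      by (rule Weierstrass_m_test[where M="\<lambda>k. eta k * (6 * (\<bar>R\<bar> + B))"])
         (use norm_terms_le(3) in \<open>auto intro: summable_mult2 summable_eta\<close>)
    thus ?thesis
      by (rule uniform_limit_theorem[rotated])
         (auto intro!: continuous_intros continuous_on_pcube2[THEN continuous_on_compose2]
               always_eventually)
  qed
  hence "continuous_on (ball 0 (norm x + 1)) (ridge_hess eta u beta)" for x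
    by (rule continuous_on_subset) (rule ball_subset_cball)
  hence "isCont (ridge_hess eta u beta) x" for x
    using continuous_on_eq_continuous_at[OF open_ball] by (metis mem_ball_0 less_add_one)
  thus ?thesis by (simp add: continuous_at_imp_continuous_on)
qed

lemma convex_on_ridge_sum: "convex_on UNIV (ridge_sum eta u beta)"
proof (rule convex_onI)
  fix t :: real and x y :: 'a assume t: "0 < t" "t < 1"
  let ?a = "\<lambda>k z. eta k * pcube (u k \<bullet> z - beta k)"
  have "?a k ((1 - t) *\<^sub>R x + t *\<^sub>R y) \<le> (1 - t) * ?a k x + t * ?a k y" for k
  proof -
    have "u k \<bullet> ((1 - t) *\<^sub>R x + t *\<^sub>R y) - beta k = (1 - t) * (u k \<bullet> x - beta k) + t * (u k \<bullet> y - beta k)"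
      by (simp add: algebra_simps)
    hence "pcube (u k \<bullet> ((1 - t) *\<^sub>R x + t *\<^sub>R y) - beta k)
           \<le> (1 - t) * pcube (u k \<bullet> x - beta k) + t * pcube (u k \<bullet> y - beta k)"
      using convex_onD[OF convex_on_pcube, of t "u k \<bullet> x - beta k" "u k \<bullet> y - beta k"] t by simp
    from mult_left_mono[OF this eta_nonneg[of k]] show ?thesis by (simp add: algebra_simps)
  qed
  hence "ridge_sum eta u beta ((1 - t) *\<^sub>R x + t *\<^sub>R y) \<le> (\<Sum>k. (1 - t) * ?a k x + t * ?a k y)"
    unfolding ridge_sum_def
    by (rule suminf_le[OF _ summable_ridge_terms]) (intro summable_add summable_mult summable_ridge_terms)
  also have "\<dots> = (1 - t) * ridge_sum eta u beta x + t * ridge_sum eta u beta y"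
    unfolding ridge_sum_def
    by (simp add: suminf_add[symmetric] suminf_mult summable_mult summable_ridge_terms)
  finally show "ridge_sum eta u beta ((1 - t) *\<^sub>R x + t *\<^sub>R y)
                \<le> (1 - t) * ridge_sum eta u beta x + t * ridge_sum eta u beta y" .
qed simp

lemma ridge_sum_nonneg: "0 \<le> ridge_sum eta u beta z"
  unfolding ridge_sum_def
  by (intro suminf_nonneg summable_ridge_terms) (simp add: eta_nonneg pcube_nonneg)

lemma ridge_sum_eq_0_iff:
  assumes "\<And>k. 0 < eta k"
  shows "ridge_sum eta u beta z = 0 \<longleftrightarrow> (\<forall>k. u k \<bullet> z \<le> beta k)"
  unfolding ridge_sum_def
  using assms by (subst suminf_eq_zero_iff[OF summable_ridge_terms])
                 (auto simp: eta_nonneg pcube_nonneg pcube_eq_0_iff less_imp_neq[OF assms, symmetric])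

end

section \<open>Failure of the Kurdyka-Lojasiewicz inequality along descending segments\<close>

lemma grad_eqI:
  assumes "(F has_derivative (\<lambda>h. v \<bullet> h)) (at x)"
  shows "grad F x = v"
  unfolding grad_def
proof (rule the_equality)
  fix g assume "(F has_derivative (\<lambda>h. g \<bullet> h)) (at x)"
  hence "(\<lambda>h. g \<bullet> h) = (\<lambda>h. v \<bullet> h)" by (rule has_derivative_unique[OF _ assms])
  hence "(g - v) \<bullet> (g - v) = 0" by (metis inner_diff_left diff_self)
  thus "g = v" by simp
qed (rule assms)

lemma grad_comp:
  assumes "(F has_derivative (\<lambda>h. G \<bullet> h)) (at x)" and "(\<phi> has_real_derivative d) (at (F x))"
  shows "grad (\<phi> \<circ> F) x = d *\<^sub>R G"
  using diff_chain_at[OF assms(1) assms(2)[THEN has_field_derivative_imp_has_derivative]]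
  by (intro grad_eqI) (simp add: o_def)

lemma Kclass_mono:
  assumes "Kclass r \<phi>" "0 \<le> x" "x \<le> y" "y < r"
  shows "\<phi> x \<le> \<phi> y"
proof (cases "x = y")
  case False
  obtain \<phi>' where cont: "continuous_on {0..<r} \<phi>"
    and der: "\<And>s. s \<in> {0<..<r} \<Longrightarrow> (\<phi> has_real_derivative \<phi>' s) (at s)"
    and pos: "\<And>s. s \<in> {0<..<r} \<Longrightarrow> \<phi>' s > 0"
    using assms(1) unfolding Kclass_def by blast
  have "x < y" using False assms by simp
  moreover have "continuous_on {x..y} \<phi>" by (rule continuous_on_subset[OF cont]) (use assms in auto)
  moreover have "\<phi> differentiable (at z)" if "x < z" "z < y" for z
    using der[of z] that assms real_differentiable_def by fastforce
  ultimately obtain l z where z: "x < z" "z < y" "DERIV \<phi> z :> l" "\<phi> y - \<phi> x = (y - x) * l"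
    using MVT by blast
  hence "z \<in> {0<..<r}" using assms by auto
  hence "0 < l" using DERIV_unique[OF z(3) der] pos by auto
  thus ?thesis using z(4) mult_pos_pos[of "y - x" l] \<open>x < y\<close> by linarith
qed simp

lemma summable_if_telescoping_increments:
  fixes a b \<delta> :: "nat \<Rightarrow> real"
  assumes "0 < c" "\<And>i. 0 \<le> \<delta> i" and increment: "\<And>i. c * \<delta> i \<le> b i - a i"
    and descending: "\<And>i. b (Suc i) \<le> a i" and "\<And>i. 0 \<le> b i"
  shows "summable \<delta>"
proof (rule summableI_nonneg_bounded)
  fix n
  have "c * (\<Sum>i<n. \<delta> i) \<le> (\<Sum>i<n. b i - a i)"
    unfolding sum_distrib_left by (rule sum_mono) (rule increment)
  also have "\<dots> \<le> b 0 - b n"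
  proof (induction n)
    case (Suc n)
    thus ?case using descending[of n] by simp
  qed simp
  finally show "(\<Sum>i<n. \<delta> i) \<le> b 0 / c"
    using \<open>0 < c\<close> \<open>0 \<le> b n\<close> by (simp add: pos_le_divide_eq mult.commute)
qed fact

lemma increment_along_segment:
  fixes F :: "'a::real_inner \<Rightarrow> real"
  assumes F: "\<And>z. (F has_derivative (\<lambda>h. G z \<bullet> h)) (at z)"
    and \<phi>: "\<And>t. t \<in> {0<..<r} \<Longrightarrow> (\<phi> has_real_derivative \<phi>' t) (at t) \<and> 0 < \<phi>' t"
    and "p \<le> q"
    and on_segment: "\<And>s. p \<le> s \<Longrightarrow> s \<le> q \<Longrightarrow>
           F (s *\<^sub>R w) \<in> {0<..<r} \<and> norm (G (s *\<^sub>R w)) \<le> 2 * (G (s *\<^sub>R w) \<bullet> w) \<and>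
           c \<le> \<phi>' (F (s *\<^sub>R w)) * norm (G (s *\<^sub>R w))"
  shows "c / 2 * (q - p) \<le> \<phi> (F (q *\<^sub>R w)) - \<phi> (F (p *\<^sub>R w))"
proof -
  define h where "h s = \<phi> (F (s *\<^sub>R w)) - c / 2 * s" for s
  have "h p \<le> h q"
  proof (rule DERIV_nonneg_imp_nondecreasing[OF \<open>p \<le> q\<close>])
    fix s assume s: "p \<le> s" "s \<le> q"
    let ?z = "s *\<^sub>R w"
    have "((\<lambda>s. s *\<^sub>R w) has_derivative (\<lambda>t. t *\<^sub>R w)) (at s)"
      by (auto intro!: derivative_eq_intros)
    from diff_chain_at[OF this F]
    have "((\<lambda>s. F (s *\<^sub>R w)) has_derivative (\<lambda>t. (G ?z \<bullet> w) * t)) (at s)"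
      by (simp add: o_def mult.commute)
    hence "((\<lambda>s. F (s *\<^sub>R w)) has_real_derivative G ?z \<bullet> w) (at s)"
      by (simp add: has_field_derivative_def)
    from DERIV_chain2[OF conjunct1[OF \<phi>] this]
    have "(h has_real_derivative \<phi>' (F ?z) * (G ?z \<bullet> w) - c / 2) (at s)"
      unfolding h_def[abs_def] using on_segment[OF s] by (auto intro!: derivative_eq_intros)
    moreover have "\<phi>' (F ?z) * norm (G ?z) \<le> \<phi>' (F ?z) * (2 * (G ?z \<bullet> w))"
      using on_segment[OF s] \<phi>[of "F ?z"] by (intro mult_left_mono) auto
    hence "c / 2 \<le> \<phi>' (F ?z) * (G ?z \<bullet> w)" using on_segment[OF s] by linarith
    ultimately show "\<exists>y. (h has_real_derivative y) (at s) \<and> 0 \<le> y" by force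
  qed
  thus ?thesis by (simp add: h_def algebra_simps diff_divide_distrib)
qed

text \<open>phi o F increases by at least c/2 * delta k along the k-th segment; since the segments
  descend in F and phi is monotone, the partial sums of delta stay bounded.\<close>
lemma summable_lengths_if_grad_comp_bounded_below:
  fixes F :: "'a::real_inner \<Rightarrow> real"
  assumes F: "\<And>z. (F has_derivative (\<lambda>h. G z \<bullet> h)) (at z)"
    and on_segment: "\<And>k s. p k \<le> s \<Longrightarrow> s \<le> q k \<Longrightarrow>
           norm (G (s *\<^sub>R w k)) \<le> 2 * (G (s *\<^sub>R w k) \<bullet> w k) \<and> 0 < F (s *\<^sub>R w k) \<and> F (s *\<^sub>R w k) \<le> E k"
    and descending: "\<And>k. F (q (Suc k) *\<^sub>R w (Suc k)) \<le> F (p k *\<^sub>R w k)"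
    and "E \<longlonglongrightarrow> 0" and "r > 0"
    and lengths: "\<And>k. 0 \<le> \<delta> k" "\<And>k. \<delta> k \<le> q k - p k"
    and "Kclass r \<phi>" and \<phi>': "\<And>t. t \<in> {0<..<r} \<Longrightarrow> (\<phi> has_real_derivative \<phi>' t) (at t) \<and> 0 < \<phi>' t"
    and "0 < c" and lower: "\<And>x. F x \<in> {0<..<r} \<Longrightarrow> c \<le> \<phi>' (F x) * norm (G x)"
  shows "summable \<delta>"
proof -
  obtain K where K: "\<And>k. k \<ge> K \<Longrightarrow> E k < r"
    using order_tendstoD(2)[OF \<open>E \<longlonglongrightarrow> 0\<close> \<open>r > 0\<close>] by (auto simp: eventually_sequentially)
  have p_le_q: "p k \<le> q k" for k using lengths[of k] by linarith
  have in_range: "F (s *\<^sub>R w (K + i)) \<in> {0<..<r}" if "p (K + i) \<le> s" "s \<le> q (K + i)" for i s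
    using on_segment[OF that] K[of "K + i"] by auto
  define a where "a i = \<phi> (F (p (K + i) *\<^sub>R w (K + i)))" for i
  define b where "b i = \<phi> (F (q (K + i) *\<^sub>R w (K + i)))" for i
  have "summable (\<lambda>i. \<delta> (i + K))"
  proof (rule summable_if_telescoping_increments[where c="c / 2" and a=a and b=b])
    show "c / 2 * \<delta> (i + K) \<le> b i - a i" for i
    proof -
      have "c / 2 * (q (K + i) - p (K + i)) \<le> b i - a i"
        unfolding a_def b_def
        by (rule increment_along_segment[OF F \<phi>' p_le_q]) (use on_segment in_range lower in auto)
      moreover have "c / 2 * \<delta> (i + K) \<le> c / 2 * (q (K + i) - p (K + i))"
        using lengths \<open>0 < c\<close> by (intro mult_left_mono) (auto simp: add.commute)
      ultimately show ?thesis by linarith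
    qed
    show "b (Suc i) \<le> a i" for i
    proof -
      have "F (q (K + Suc i) *\<^sub>R w (K + Suc i)) \<in> {0<..<r}" "F (p (K + i) *\<^sub>R w (K + i)) \<in> {0<..<r}"
        using in_range[of "Suc i" "q (K + Suc i)"] in_range[of i "p (K + i)"] p_le_q by auto
      thus ?thesis unfolding a_def b_def using descending[of "K + i"]
        by (intro Kclass_mono[OF \<open>Kclass r \<phi>\<close>]) auto
    qed
    show "0 \<le> b i" for i
      using Kclass_mono[OF \<open>Kclass r \<phi>\<close>, of 0] in_range[of i] p_le_q \<open>Kclass r \<phi>\<close>
      by (auto simp: b_def Kclass_def less_imp_le)
  qed (use \<open>0 < c\<close> lengths in auto)
  thus ?thesis using summable_iff_shift by blast
qed

lemma Inf_norm_grad_comp_eq_0: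
  fixes F :: "real^2 \<Rightarrow> real" and G w :: "_ \<Rightarrow> real^2"
  assumes F: "\<And>z. (F has_derivative (\<lambda>h. G z \<bullet> h)) (at z)"
    and on_segment: "\<And>k s. p k \<le> s \<Longrightarrow> s \<le> q k \<Longrightarrow>
           norm (G (s *\<^sub>R w k)) \<le> 2 * (G (s *\<^sub>R w k) \<bullet> w k) \<and> 0 < F (s *\<^sub>R w k) \<and> F (s *\<^sub>R w k) \<le> E k"
    and descending: "\<And>k. F (q (Suc k) *\<^sub>R w (Suc k)) \<le> F (p k *\<^sub>R w k)"
    and "E \<longlonglongrightarrow> 0"
    and lengths: "\<And>k. 0 \<le> \<delta> k" "\<And>k. \<delta> k \<le> q k - p k" and "\<not> summable \<delta>"
    and "r > 0" and "Kclass r \<phi>"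
  shows "Inf {norm (grad (\<phi> \<circ> F) x) | x. 0 < F x \<and> F x < r} = 0"
proof -
  obtain \<phi>' where \<phi>': "\<And>t. t \<in> {0<..<r} \<Longrightarrow> (\<phi> has_real_derivative \<phi>' t) (at t) \<and> 0 < \<phi>' t"
    using \<open>Kclass r \<phi>\<close> unfolding Kclass_def by blast
  define S where "S = {norm (grad (\<phi> \<circ> F) x) | x. 0 < F x \<and> F x < r}"
  have norm_grad: "norm (grad (\<phi> \<circ> F) x) = \<phi>' (F x) * norm (G x)" if "F x \<in> {0<..<r}" for x
    using grad_comp[OF F conjunct1[OF \<phi>'[OF that]]] \<phi>'[OF that] by simp
  obtain k where "E k < r"
    using order_tendstoD(2)[OF \<open>E \<longlonglongrightarrow> 0\<close> \<open>r > 0\<close>] unfolding eventually_sequentially by blast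
  hence "S \<noteq> {}" using on_segment[of k "p k"] lengths[of k] by (auto simp: S_def)
  have "bdd_below S" unfolding S_def by (rule bdd_belowI[of _ 0]) auto
  have "0 \<le> Inf S" using \<open>S \<noteq> {}\<close> by (rule cInf_greatest) (auto simp: S_def)
  moreover have "Inf S \<le> \<phi>' (F x) * norm (G x)" if "F x \<in> {0<..<r}" for x
  proof -
    have "norm (grad (\<phi> \<circ> F) x) \<in> S" using that by (auto simp: S_def)
    thus ?thesis using cInf_lower[OF _ \<open>bdd_below S\<close>] norm_grad[OF that] by simp
  qed
  hence "\<not> 0 < Inf S"
    using summable_lengths_if_grad_comp_bounded_below[OF F on_segment descending \<open>E \<longlonglongrightarrow> 0\<close>
            \<open>r > 0\<close> lengths \<open>Kclass r \<phi>\<close> \<phi>'] \<open>\<not> summable \<delta>\<close>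
    by blast
  ultimately show ?thesis by (simp add: S_def)
qed

section \<open>The construction\<close>

text \<open>Through the Cantor pairing, k = triangle d + i with i \<le> d; the k-th direction is the
  i-th of d + 1 equally spaced directions of layer d.\<close>
definition layer :: "nat \<Rightarrow> nat" where "layer k = fst (prod_decode k) + snd (prod_decode k)"
definition slot :: "nat \<Rightarrow> nat" where "slot k = fst (prod_decode k)"

lemma triangle_layer_add_slot: "triangle (layer k) + slot k = k"
  using prod_decode_inverse[of k] by (simp add: prod_encode_def layer_def slot_def split: prod.splits)

lemma slot_le_layer: "slot k \<le> layer k"
  by (simp add: layer_def slot_def)

lemma layer_slot_eqI:
  assumes "k = triangle d + i" "i \<le> d"
  shows "layer k = d" "slot k = i"
  using assms by (simp_all add: prod_decode_triangle_add prod_decode_aux.simps layer_def slot_def)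

lemma layer_slot_inj: "layer j = layer k \<Longrightarrow> slot j = slot k \<Longrightarrow> j = k"
  by (metis triangle_layer_add_slot)

lemma triangle_add_less_triangle: "d < e \<Longrightarrow> triangle d + d < triangle e"
  by (induction e) (auto simp: less_Suc_eq)

lemma layer_mono: "j \<le> k \<Longrightarrow> layer j \<le> layer k"
  using triangle_add_less_triangle[of "layer k" "layer j"]
        triangle_layer_add_slot[of j] triangle_layer_add_slot[of k] slot_le_layer[of k]
  by linarith

lemma two_mult_triangle: "2 * triangle n = n * Suc n"
  by (induction n) auto

lemma layer_bound: "(real (layer k) + 1) * (real (layer k) + 2) \<le> 4 * (real k + 1)"
proof -
  let ?d = "real (layer k)"
  have "layer k * Suc (layer k) \<le> 2 * k"
    using triangle_layer_add_slot[of k] two_mult_triangle[of "layer k"] by linarith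
  hence "?d * (?d + 1) \<le> 2 * real k" by (simp add: algebra_simps flip: of_nat_mult of_nat_le_iff)
  moreover have "0 \<le> (?d - 1) * (?d - 1)" by simp
  ultimately show ?thesis by (simp add: algebra_simps)
qed

definition gap :: "nat \<Rightarrow> real" where "gap d = 1 / ((real d + 1) * (real d + 2))"

lemma gap_pos: "0 < gap d"
  by (simp add: gap_def)

lemma gap_le_half: "gap d \<le> 1 / 2"
proof -
  have "2 \<le> (real d + 1) * (real d + 2)" by (simp add: algebra_simps)
  thus ?thesis unfolding gap_def by (intro divide_left_mono) auto
qed

lemma gap_layer_ge: "inverse (real (Suc k)) / 4 \<le> gap (layer k)"
proof -
  have "1 / (4 * (real k + 1)) \<le> gap (layer k)"
    unfolding gap_def using layer_bound[of k] by (intro divide_left_mono) auto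
  thus ?thesis by (simp add: inverse_eq_divide divide_divide_eq_left mult.commute add.commute)
qed

lemma inverse_add_gap: "1 / (real d + 2) + gap d = 1 / (real d + 1)"
proof -
  have nz: "(real d + 1) * (real d + 2) \<noteq> 0" "real d + 2 \<noteq> 0" "real d + 1 \<noteq> 0" by auto
  have "1 / (real d + 2) = (real d + 1) / ((real d + 1) * (real d + 2))" using nz by simp
  hence "1 / (real d + 2) + gap d = ((real d + 1) + 1) / ((real d + 1) * (real d + 2))"
    by (simp add: gap_def add_divide_distrib)
  also have "\<dots> = 1 / (real d + 1)" using nz by (simp add: add.commute)
  finally show ?thesis .
qed

lemma cos_le_taylor4: "cos (x::real) \<le> 1 - x\<^sup>2 / 2 + x ^ 4 / 24"
proof -
  obtain t where t: "cos x = (\<Sum>m<4. cos_coeff m * x ^ m) + (cos (t + 1/2 * real 4 * pi) / fact 4) * x ^ 4"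
    using Maclaurin_cos_expansion[of x 4] by blast
  have "{..<4::nat} = {0, 1, 2, 3}" by auto
  hence "(\<Sum>m<4. cos_coeff m * x ^ m) = 1 - x\<^sup>2 / 2"
    by (simp add: cos_coeff_def)
  moreover have "(cos (t + 1/2 * real 4 * pi) / fact 4) * x ^ 4 \<le> (1 / 24) * x ^ 4"
    by (intro mult_right_mono) (auto simp: fact_numeral)
  ultimately show ?thesis using t by simp
qed

lemma gap_le_one_minus_cos:
  assumes "1 \<le> m" "m \<le> d"
  shows "gap d \<le> 1 - cos (2 * pi * real m / (real d + 1))"
proof -
  define x where "x = 2 * pi * real m / (real d + 1)"
  define y where "y = (if x \<le> pi then x else 2 * pi - x)"
  have "cos x = cos y" unfolding y_def using cos_2pi_minus[of x] by simp
  have "2 * pi / (real d + 1) \<le> x" unfolding x_def using assms by (intro divide_right_mono) auto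
  moreover have "x \<le> 2 * pi - 2 * pi / (real d + 1)"
  proof -
    have "x \<le> 2 * pi * real d / (real d + 1)" unfolding x_def using assms by (intro divide_right_mono) auto
    also have "\<dots> = 2 * pi - 2 * pi / (real d + 1)" by (simp add: field_simps)
    finally show ?thesis .
  qed
  ultimately have y: "2 * pi / (real d + 1) \<le> y" "y \<le> pi" unfolding y_def by auto
  show ?thesis
  proof (cases "pi / 2 \<le> y")
    case True
    have "0 \<le> cos (pi - y)" by (rule cos_ge_zero) (use True y in auto)
    thus ?thesis using gap_le_half[of d] \<open>cos x = cos y\<close> by (simp add: x_def)
  next
    case False
    have "0 \<le> y" by (rule order_trans[OF _ y(1)]) simp
    moreover have "y \<le> 2" using False pi_less_4 by linarith
    ultimately have "y\<^sup>2 * y\<^sup>2 \<le> y\<^sup>2 * 4"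
      using power_mono[of y 2 2] by (intro mult_left_mono) auto
    hence "y ^ 4 \<le> y\<^sup>2 * 4" by (simp add: power2_eq_square eval_nat_numeral)
    hence "y\<^sup>2 / 3 \<le> 1 - cos y" using cos_le_taylor4[of y] by simp
    moreover have "6 / (real d + 1) \<le> y"
      using y(1) pi_gt3 divide_right_mono[of 6 "2 * pi" "real d + 1"] by linarith
    hence "(6 / (real d + 1))\<^sup>2 \<le> y\<^sup>2" by (intro power_mono) auto
    hence "12 / (real d + 1)\<^sup>2 \<le> y\<^sup>2 / 3" by (simp add: power_divide)
    moreover have "gap d \<le> 12 / (real d + 1)\<^sup>2"
      unfolding gap_def by (intro divide_mono) (auto simp: power2_eq_square intro!: mult_left_mono)
    ultimately show ?thesis using \<open>cos x = cos y\<close> by (simp add: x_def)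
  qed
qed

definition dir :: "real \<Rightarrow> real^2" where "dir t = (\<chi> i. if i = 1 then cos t else sin t)"

lemma inner_dir: "dir a \<bullet> dir b = cos (a - b)"
  by (simp add: inner_vec_def sum_2 dir_def cos_diff)

lemma norm_dir: "norm (dir a) = 1"
  by (simp add: norm_eq_sqrt_inner inner_dir)

lemma inner_dir_left: "dir a \<bullet> z = cos a * z $ 1 + sin a * z $ 2"
  by (simp add: dir_def inner_vec_def sum_2)

definition angle :: "nat \<Rightarrow> real" where "angle k = 2 * pi * real (slot k) / (real (layer k) + 1)"
definition normal :: "nat \<Rightarrow> real^2" where "normal k = dir (angle k)"
definition offset :: "nat \<Rightarrow> real" where "offset k = 1 + 1 / (real (layer k) + 2)"
definition weight :: "nat \<Rightarrow> real" where "weight k = (1/2) ^ (2 * k\<^sup>2 + 16 * k)"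

lemma weight_pos: "0 < weight k"
  by (simp add: weight_def)

lemma weight_le_geometric: "weight k \<le> (1/2) ^ k"
  unfolding weight_def by (rule power_decreasing) (auto simp: power2_eq_square)

lemma summable_weight: "summable weight"
  by (rule summable_comparison_test'[where g="\<lambda>k. (1/2::real) ^ k" and N=0])
     (use weight_le_geometric weight_pos in \<open>auto simp: less_imp_le\<close>)

lemma weight_tendsto_0: "weight \<longlonglongrightarrow> 0"
  by (rule summable_LIMSEQ_zero[OF summable_weight])

lemma offset_bounds: "1 \<le> offset k" "offset k \<le> 2"
  by (simp_all add: offset_def)

interpretation W: ridge_series weight normal offset 2
proof
  show "\<bar>offset k\<bar> \<le> 2" for k using offset_bounds[of k] by linarith
qed (auto simp: weight_pos less_imp_le summable_weight normal_def norm_dir)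

definition tail :: "nat \<Rightarrow> real" where "tail k = (\<Sum>i. weight (i + Suc k))"

lemma summable_weight_shift: "summable (\<lambda>i. weight (i + Suc k))"
  using summable_ignore_initial_segment[OF summable_weight] .

lemma tail_nonneg: "0 \<le> tail k"
  unfolding tail_def by (intro suminf_nonneg summable_weight_shift) (simp add: weight_pos less_imp_le)

lemma tail_Suc: "tail k = weight (Suc k) + tail (Suc k)"
  using suminf_split_head[OF summable_weight_shift[of k]] by (simp add: tail_def)

lemma tail_le: "tail k \<le> 2 * weight (Suc k)"
proof -
  have "weight (i + Suc k) \<le> weight (Suc k) * (1/2) ^ i" for i
  proof -
    have "2 * (Suc k)\<^sup>2 + 16 * Suc k + i \<le> 2 * (i + Suc k)\<^sup>2 + 16 * (i + Suc k)"
      by (simp add: power2_eq_square algebra_simps)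
    thus ?thesis unfolding weight_def power_add[symmetric] by (intro power_decreasing) auto
  qed
  hence "tail k \<le> (\<Sum>i. weight (Suc k) * (1/2::real) ^ i)"
    unfolding tail_def by (intro suminf_le summable_weight_shift summable_mult summable_geometric) auto
  also have "\<dots> = 2 * weight (Suc k)" using suminf_geometric[of "1/2::real"] by (simp add: suminf_mult)
  finally show ?thesis .
qed

text \<open>The quadratic exponent makes each weight, even multiplied by the cube of its gap (which is
  of order 1/k), dominate the whole tail of later weights.\<close>
lemma tail_le_weight_gap_cube: "512 * tail k \<le> weight k * gap (layer k) ^ 3"
proof -
  have "2 * k\<^sup>2 + 16 * k + (3 * k + 16) \<le> 2 * (Suc k)\<^sup>2 + 16 * Suc k"
    by (simp add: power2_eq_square algebra_simps)
  hence "weight (Suc k) \<le> weight k * (1/2) ^ (3 * k + 16)"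
    unfolding weight_def power_add[symmetric] by (intro power_decreasing) auto
  hence "512 * tail k \<le> weight k * (1024 * (1/2) ^ (3 * k + 16))"
    using tail_le[of k] by simp
  also have "(1024::real) * (1/2) ^ (3 * k + 16) = ((1/2) ^ (k + 2)) ^ 3"
    by (simp add: power_add power_mult_distrib field_simps flip: power_mult)
  also have "\<dots> \<le> gap (layer k) ^ 3"
  proof (rule power_mono)
    have "real k + 1 \<le> 2 ^ k"
      using less_exp[of k] by (metis Suc_eq_plus1 Suc_leI of_nat_1 of_nat_add of_nat_le_iff of_nat_numeral of_nat_power)
    hence "(1/2::real) ^ (k + 2) \<le> inverse (real (Suc k)) / 4"
      by (simp add: power_add power_one_over inverse_eq_divide divide_left_mono)
    thus "(1/2::real) ^ (k + 2) \<le> gap (layer k)" using gap_layer_ge[of k] by linarith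
  qed simp
  finally show ?thesis using weight_pos[of k] by (simp add: mult_left_mono)
qed

lemma cos_angle_diff_same_layer:
  assumes "j \<noteq> k" "layer j = layer k"
  shows "cos (angle j - angle k) \<le> 1 - gap (layer k)"
proof -
  let ?d = "layer k"
  define m where "m = (if slot k < slot j then slot j - slot k else slot k - slot j)"
  have "slot j \<noteq> slot k" using assms layer_slot_inj by blast
  moreover have "slot j \<le> ?d" "slot k \<le> ?d" using slot_le_layer[of j] slot_le_layer[of k] assms by auto
  ultimately have m: "1 \<le> m" "m \<le> ?d" "\<bar>real (slot j) - real (slot k)\<bar> = real m"
    by (auto simp: m_def of_nat_diff)
  have "angle j - angle k = 2 * pi * (real (slot j) - real (slot k)) / (real ?d + 1)"
    using assms by (simp add: angle_def diff_divide_distrib algebra_simps)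
  hence "\<bar>angle j - angle k\<bar> = 2 * pi * real m / (real ?d + 1)"
    using m(3) by (simp add: abs_mult abs_divide)
  hence "cos (angle j - angle k) = cos (2 * pi * real m / (real ?d + 1))"
    by (metis cos_abs_real)
  thus ?thesis using gap_le_one_minus_cos[OF m(1,2)] by simp
qed

text \<open>Segment k of the ray through normal k runs from just beyond the line of ridge k to the offset
  of the previous layer (see seg_end_eq), up to which the earlier ridges stay inactive.\<close>
definition seg_start :: "nat \<Rightarrow> real" where "seg_start k = offset k + gap (layer k) / 2"
definition seg_end :: "nat \<Rightarrow> real" where "seg_end k = offset k + gap (layer k)"

lemma seg_end_eq: "seg_end k = 1 + 1 / (real (layer k) + 1)"
  using inverse_add_gap[of "layer k"] by (simp add: seg_end_def offset_def)

lemma seg_end_le_2: "seg_end k \<le> 2"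
  by (simp add: seg_end_eq)

lemma earlier_ridge_inactive:
  assumes "j < k" "1 \<le> s" "s \<le> seg_end k"
  shows "normal j \<bullet> (s *\<^sub>R normal k) \<le> offset j"
proof -
  have inner: "normal j \<bullet> (s *\<^sub>R normal k) = s * cos (angle j - angle k)"
    by (simp add: normal_def inner_dir)
  show ?thesis
  proof (cases "layer j < layer k")
    case True
    have "s * cos (angle j - angle k) \<le> s" using assms by (simp add: mult_left_le)
    also have "\<dots> \<le> 1 + 1 / (real (layer k) + 1)" using assms(3) by (simp add: seg_end_eq)
    also have "\<dots> \<le> offset j"
      unfolding offset_def using True by (simp add: frac_le)
    finally show ?thesis using inner by linarith
  next
    case False
    hence same: "layer j = layer k" using layer_mono[of j k] assms(1) by simp
    have "s * cos (angle j - angle k) \<le> s * (1 - gap (layer k))"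
      using cos_angle_diff_same_layer[OF _ same] assms by (intro mult_left_mono) auto
    also have "\<dots> \<le> s - gap (layer k)" using assms gap_pos[of "layer k"] by (simp add: algebra_simps)
    also have "\<dots> \<le> offset j" using assms(3) same by (simp add: seg_end_def offset_def)
    finally show ?thesis using inner by linarith
  qed
qed

lemma suminf_eq_term_add_tail:
  fixes T :: "nat \<Rightarrow> 'a::real_normed_vector"
  assumes "summable T" "\<And>j. j < k \<Longrightarrow> T j = 0"
  shows "suminf T = T k + (\<Sum>i. T (i + Suc k))"
proof -
  have "sum T {..<k} = 0" using assms(2) by (intro sum.neutral) auto
  thus ?thesis using suminf_split_initial_segment[OF assms(1), of "Suc k"] by simp
qed

definition counterexample :: "real^2 \<Rightarrow> real" where
  "counterexample = ridge_sum weight normal offset"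

definition counterexample_grad :: "real^2 \<Rightarrow> real^2" where
  "counterexample_grad = ridge_grad weight normal offset"

lemma ridge_args_on_ray:
  assumes "1 \<le> s" "s \<le> seg_end k"
  shows "\<And>j. j < k \<Longrightarrow> normal j \<bullet> (s *\<^sub>R normal k) - offset j \<le> 0"
    and "normal k \<bullet> (s *\<^sub>R normal k) - offset k = s - offset k"
    and "\<And>j. \<bar>normal j \<bullet> (s *\<^sub>R normal k) - offset j\<bar> \<le> 4"
proof -
  show "\<And>j. j < k \<Longrightarrow> normal j \<bullet> (s *\<^sub>R normal k) - offset j \<le> 0"
    using earlier_ridge_inactive assms by fastforce
  show "normal k \<bullet> (s *\<^sub>R normal k) - offset k = s - offset k"
    by (simp add: normal_def inner_dir)
  have "norm (s *\<^sub>R normal k) \<le> 2"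
    using assms seg_end_le_2[of k] by (simp add: normal_def norm_dir)
  from W.abs_arg_le[OF this] show "\<And>j. \<bar>normal j \<bullet> (s *\<^sub>R normal k) - offset j\<bar> \<le> 4" by simp
qed

lemma counterexample_on_ray:
  assumes "1 \<le> s" "s \<le> seg_end k"
  shows "weight k * pcube (s - offset k) \<le> counterexample (s *\<^sub>R normal k)"
    and "counterexample (s *\<^sub>R normal k) \<le> weight k * pcube (s - offset k) + 64 * tail k"
proof -
  let ?T = "\<lambda>j. weight j * pcube (normal j \<bullet> (s *\<^sub>R normal k) - offset j)"
  have "suminf ?T = ?T k + (\<Sum>i. ?T (i + Suc k))"
    by (rule suminf_eq_term_add_tail[OF W.summable_ridge_terms])
       (use ridge_args_on_ray(1)[OF assms] in \<open>simp add: pcube_eq_0_iff\<close>)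
  hence split: "counterexample (s *\<^sub>R normal k) = weight k * pcube (s - offset k) + (\<Sum>i. ?T (i + Suc k))"
    by (simp only: counterexample_def ridge_sum_def ridge_args_on_ray(2)[OF assms])
  have summable: "summable (\<lambda>i. ?T (i + Suc k))"
    using summable_ignore_initial_segment[OF W.summable_ridge_terms] .
  have "0 \<le> (\<Sum>i. ?T (i + Suc k))"
    by (intro suminf_nonneg summable) (simp add: weight_pos less_imp_le pcube_nonneg)
  thus "weight k * pcube (s - offset k) \<le> counterexample (s *\<^sub>R normal k)" using split by simp
  have "?T (i + Suc k) \<le> 64 * weight (i + Suc k)" for i
    using pcube_le[OF ridge_args_on_ray(3)[OF assms]] weight_pos[of "i + Suc k"]
    by (simp add: mult.commute mult_left_mono)
  hence "(\<Sum>i. ?T (i + Suc k)) \<le> 64 * tail k"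
    unfolding tail_def
    by (subst suminf_mult[OF summable_weight_shift, symmetric])
       (intro suminf_le summable summable_mult summable_weight_shift)
  thus "counterexample (s *\<^sub>R normal k) \<le> weight k * pcube (s - offset k) + 64 * tail k"
    using split by simp
qed

lemma counterexample_grad_on_ray:
  assumes "1 \<le> s" "s \<le> seg_end k"
  shows "norm (counterexample_grad (s *\<^sub>R normal k) - (weight k * pcube1 (s - offset k)) *\<^sub>R normal k)
         \<le> 48 * tail k"
proof -
  let ?G = "\<lambda>j. (weight j * pcube1 (normal j \<bullet> (s *\<^sub>R normal k) - offset j)) *\<^sub>R normal j"
  have "suminf ?G = ?G k + (\<Sum>i. ?G (i + Suc k))"
    by (rule suminf_eq_term_add_tail[OF W.summable_ridge_grad_terms])
       (use ridge_args_on_ray(1)[OF assms] in \<open>simp add: pcube1_eq_0\<close>)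
  hence "counterexample_grad (s *\<^sub>R normal k) = (weight k * pcube1 (s - offset k)) *\<^sub>R normal k
          + (\<Sum>i. ?G (i + Suc k))"
    by (simp only: counterexample_grad_def ridge_grad_def ridge_args_on_ray(2)[OF assms])
  moreover have bound: "norm (?G (i + Suc k)) \<le> 48 * weight (i + Suc k)" for i
    using pcube1_le[OF ridge_args_on_ray(3)[OF assms]] weight_pos[of "i + Suc k"] pcube1_nonneg
    by (simp add: normal_def norm_dir abs_mult mult.commute mult_left_mono)
  hence "summable (\<lambda>i. norm (?G (i + Suc k)))"
    by (intro summable_comparison_test'[where N=0, OF summable_mult[OF summable_weight_shift]]) auto
  hence "norm (\<Sum>i. ?G (i + Suc k)) \<le> (\<Sum>i. 48 * weight (i + Suc k))"
    using bound by (intro order_trans[OF summable_norm] suminf_le summable_mult summable_weight_shift)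
  moreover have "(\<Sum>i. 48 * weight (i + Suc k)) = 48 * tail k"
    unfolding tail_def by (rule suminf_mult[OF summable_weight_shift])
  ultimately show ?thesis by simp
qed

lemma segment_arg_bounds:
  assumes "seg_start k \<le> s" "s \<le> seg_end k"
  shows "1 \<le> s" "gap (layer k) / 2 \<le> s - offset k" "s - offset k \<le> gap (layer k)"
  using assms offset_bounds(1)[of k] gap_pos[of "layer k"] by (auto simp: seg_start_def seg_end_def)

lemma counterexample_on_segment:
  assumes "seg_start k \<le> s" "s \<le> seg_end k"
  shows "0 < counterexample (s *\<^sub>R normal k)" "counterexample (s *\<^sub>R normal k) \<le> weight k"
proof -
  define D where "D = gap (layer k)"
  define a where "a = s - offset k"
  have D: "0 < D" "D \<le> 1/2" using gap_pos gap_le_half by (auto simp: D_def)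
  have a: "D / 2 \<le> a" "a \<le> D" and "1 \<le> s"
    using segment_arg_bounds[OF assms] by (auto simp: a_def D_def)
  have "0 < weight k * (D / 2) ^ 3" using D weight_pos[of k] by simp
  also have "\<dots> \<le> weight k * pcube a"
    using a D weight_pos[of k] by (auto simp: pcube_pos intro!: mult_left_mono power_mono)
  also have "\<dots> \<le> counterexample (s *\<^sub>R normal k)"
    using counterexample_on_ray(1)[OF \<open>1 \<le> s\<close> assms(2)] by (simp add: a_def)
  finally show "0 < counterexample (s *\<^sub>R normal k)" .
  have "D ^ 3 \<le> (1/2) ^ 3" using D by (intro power_mono) auto
  hence "weight k * D ^ 3 \<le> weight k / 8"
    using weight_pos[of k] by (simp add: power_one_over mult_left_mono)
  moreover have "weight k * pcube a \<le> weight k * D ^ 3"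
    using a D weight_pos[of k] by (auto simp: pcube_pos intro!: mult_left_mono power_mono)
  moreover have "counterexample (s *\<^sub>R normal k) \<le> weight k * pcube a + 64 * tail k"
    using counterexample_on_ray(2)[OF \<open>1 \<le> s\<close> assms(2)] by (simp add: a_def)
  moreover have "512 * tail k \<le> weight k * D ^ 3" using tail_le_weight_gap_cube by (simp add: D_def)
  ultimately show "counterexample (s *\<^sub>R normal k) \<le> weight k" using weight_pos[of k] by linarith
qed

text \<open>On the segment the k-th ridge term dominates, so the gradient stays within 60 degrees
  of the ray direction.\<close>
lemma counterexample_grad_on_segment:
  assumes "seg_start k \<le> s" "s \<le> seg_end k"
  shows "norm (counterexample_grad (s *\<^sub>R normal k))
         \<le> 2 * (counterexample_grad (s *\<^sub>R normal k) \<bullet> normal k)"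
proof -
  define D where "D = gap (layer k)"
  define X where "X = weight k * pcube1 (s - offset k)"
  define e where "e = counterexample_grad (s *\<^sub>R normal k) - X *\<^sub>R normal k"
  have D: "0 < D" "D \<le> 1/2" using gap_pos gap_le_half by (auto simp: D_def)
  have a: "D / 2 \<le> s - offset k" and "1 \<le> s"
    using segment_arg_bounds[OF assms] by (auto simp: D_def)
  have "weight k * (3 * (D / 2)\<^sup>2) \<le> X"
    using a D weight_pos[of k] by (auto simp: X_def pcube1_pos intro!: mult_left_mono power_mono)
  hence "3 / 4 * (weight k * D\<^sup>2) \<le> X" by (simp add: power_divide)
  moreover have "norm e \<le> 48 * tail k"
    using counterexample_grad_on_ray[OF \<open>1 \<le> s\<close> assms(2)] by (simp add: e_def X_def)
  moreover have "512 * tail k \<le> weight k * D ^ 3" using tail_le_weight_gap_cube by (simp add: D_def)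
  moreover have "weight k * D ^ 3 \<le> weight k * D\<^sup>2 / 2"
    using D weight_pos[of k] by (simp add: power3_eq_cube power2_eq_square mult_left_mono)
  moreover have "0 \<le> weight k * D\<^sup>2" using weight_pos[of k] by simp
  ultimately have "3 * norm e \<le> X" by linarith
  moreover have "\<bar>e \<bullet> normal k\<bar> \<le> norm e"
    using Cauchy_Schwarz_ineq2[of e "normal k"] by (simp add: normal_def norm_dir)
  moreover have "norm (counterexample_grad (s *\<^sub>R normal k)) \<le> \<bar>X\<bar> + norm e"
    using norm_triangle_ineq[of "X *\<^sub>R normal k" e] by (simp add: e_def normal_def norm_dir)
  moreover have "counterexample_grad (s *\<^sub>R normal k) \<bullet> normal k = X + e \<bullet> normal k"
    by (simp add: e_def inner_diff_left normal_def inner_dir)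
  ultimately show ?thesis by (simp add: abs_le_iff)
qed

lemma segments_descending:
  "counterexample (seg_end (Suc k) *\<^sub>R normal (Suc k)) \<le> counterexample (seg_start k *\<^sub>R normal k)"
proof -
  have "\<bar>seg_end (Suc k) - offset (Suc k)\<bar> \<le> 1"
    using gap_pos[of "layer (Suc k)"] gap_le_half[of "layer (Suc k)"] by (simp add: seg_end_def)
  hence "weight (Suc k) * pcube (seg_end (Suc k) - offset (Suc k)) \<le> weight (Suc k)"
    using pcube_le[of _ 1] weight_pos[of "Suc k"] by (simp add: mult_left_le)
  moreover have "1 \<le> seg_end (Suc k)" by (simp add: seg_end_eq)
  ultimately have "counterexample (seg_end (Suc k) *\<^sub>R normal (Suc k)) \<le> weight (Suc k) + 64 * tail (Suc k)"
    using counterexample_on_ray(2)[of "seg_end (Suc k)" "Suc k"] by simp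
  also have "\<dots> \<le> 64 * tail k" using tail_Suc[of k] weight_pos[of "Suc k"] tail_nonneg[of "Suc k"] by simp
  also have "\<dots> \<le> weight k * (gap (layer k) / 2) ^ 3"
    using tail_le_weight_gap_cube[of k] by (simp add: power_divide)
  also have "\<dots> \<le> counterexample (seg_start k *\<^sub>R normal k)"
    using counterexample_on_ray(1)[of "seg_start k" k] segment_arg_bounds[of k "seg_start k"] gap_pos
    by (simp add: seg_start_def seg_end_def pcube_pos)
  finally show ?thesis .
qed

lemma counterexample_eq_0_iff: "counterexample z = 0 \<longleftrightarrow> (\<forall>k. normal k \<bullet> z \<le> offset k)"
  unfolding counterexample_def by (rule W.ridge_sum_eq_0_iff[OF weight_pos])

lemma ball_subset_zeros: "ball 0 1 \<subseteq> {z. counterexample z = 0}"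
proof
  fix z :: "real^2" assume "z \<in> ball 0 1"
  have "normal k \<bullet> z \<le> offset k" for k
    using Cauchy_Schwarz_ineq2[of "normal k" z] \<open>z \<in> ball 0 1\<close> offset_bounds(1)[of k]
    by (simp add: normal_def norm_dir)
  thus "z \<in> {z. counterexample z = 0}" by (simp add: counterexample_eq_0_iff)
qed

text \<open>Layer 3, i.e. indices 6 to 9, consists of the four axis directions.\<close>
lemma zeros_subset_cball: "{z. counterexample z = 0} \<subseteq> cball 0 4"
proof
  fix z :: "real^2" assume "z \<in> {z. counterexample z = 0}"
  hence "\<forall>k. normal k \<bullet> z \<le> offset k" by (simp add: counterexample_eq_0_iff)
  hence le: "normal k \<bullet> z \<le> 2" for k using offset_bounds(2)[of k] by (meson order_trans)
  have angle: "angle (6 + i) = pi * real i / 2" if "i \<le> 3" for i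
    using layer_slot_eqI[of "6 + i" 3 i] that by (simp add: angle_def triangle_def)
  have axes: "angle 6 = 0" "angle 7 = pi / 2" "angle 8 = pi" "angle 9 = 3 * pi / 2"
    using angle[of 0] angle[of 1] angle[of 2] angle[of 3] by simp_all
  have "cos (3 * pi / 2) = 0" "sin (3 * pi / 2) = -1"
    using cos_periodic_pi2[of "pi / 2"] sin_periodic_pi2[of "pi / 2"] by (simp_all add: algebra_simps)
  hence "z $ 1 \<le> 2" "z $ 2 \<le> 2" "- z $ 1 \<le> 2" "- z $ 2 \<le> 2"
    using le[of 6] le[of 7] le[of 8] le[of 9] unfolding normal_def inner_dir_left axes by simp_all
  hence "norm z \<le> 4" using norm_le_l1_cart[of z] by (simp add: sum_2)
  thus "z \<in> cball 0 4" by simp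
qed

lemma C2_on_plane_counterexample: "C2_on_plane counterexample"
  unfolding C2_on_plane_def counterexample_def
  using W.has_derivative_ridge_sum W.has_derivative_ridge_grad W.continuous_on_ridge_hess by blast

lemma compact_zeros: "compact {z. counterexample z = 0}"
proof -
  have "{z. counterexample z = 0} = (\<Inter>k. {z. normal k \<bullet> z \<le> offset k})"
    by (auto simp: counterexample_eq_0_iff)
  hence "closed {z. counterexample z = 0}" by (simp add: closed_INT closed_halfspace_le)
  thus ?thesis
    using bounded_subset[OF bounded_cball zeros_subset_cball] by (simp add: compact_eq_bounded_closed)
qed

lemma Inf_norm_grad_comp_counterexample_eq_0:
  assumes "r > 0" "Kclass r \<phi>"
  shows "Inf {norm (grad (\<phi> \<circ> counterexample) x) | x. 0 < counterexample x \<and> counterexample x < r} = 0"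
proof (rule Inf_norm_grad_comp_eq_0[where G=counterexample_grad and w=normal and p=seg_start
              and q=seg_end and E=weight and \<delta>="\<lambda>k. inverse (real (Suc k)) / 8"])
  show "(counterexample has_derivative (\<lambda>h. counterexample_grad z \<bullet> h)) (at z)" for z
    unfolding counterexample_def counterexample_grad_def by (rule W.has_derivative_ridge_sum)
  show "norm (counterexample_grad (s *\<^sub>R normal k)) \<le> 2 * (counterexample_grad (s *\<^sub>R normal k) \<bullet> normal k) \<and>
        0 < counterexample (s *\<^sub>R normal k) \<and> counterexample (s *\<^sub>R normal k) \<le> weight k"
    if "seg_start k \<le> s" "s \<le> seg_end k" for k s
    using counterexample_on_segment[OF that] counterexample_grad_on_segment[OF that] by blast
  show "inverse (real (Suc k)) / 8 \<le> seg_end k - seg_start k" for k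
    using gap_layer_ge[of k] by (simp add: seg_start_def seg_end_def)
  have "\<not> summable (\<lambda>n. inverse (real n))" by (rule not_summable_harmonic)
  thus "\<not> summable (\<lambda>k. inverse (real (Suc k)) / 8)"
    using summable_Suc_iff[of "\<lambda>n. inverse (real n)"] by simp
qed (simp_all add: segments_descending weight_tendsto_0 assms)

theorem theorem4p11:
  shows "\<exists>f :: real^2 \<Rightarrow> real.
    C2_on_plane f \<and> convex_on UNIV f \<and>
    (\<forall>x. 0 \<le> f x) \<and> (\<exists>x. f x = 0) \<and>
    compact {x. f x = 0} \<and> interior {x. f x = 0} \<noteq> {} \<and>
    (\<forall>r > 0. \<forall>\<phi>. Kclass r \<phi> \<longrightarrow>
       Inf {norm (grad (\<phi> \<circ> f) x) | x. 0 < f x \<and> f x < r} = 0)"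
proof (intro exI conjI allI impI)
  show "convex_on UNIV counterexample" unfolding counterexample_def by (rule W.convex_on_ridge_sum)
  show "0 \<le> counterexample x" for x unfolding counterexample_def by (rule W.ridge_sum_nonneg)
  show "counterexample 0 = 0" using subsetD[OF ball_subset_zeros, of 0] by simp
  have "ball 0 1 \<subseteq> interior {z. counterexample z = 0}"
    by (rule interior_maximal[OF ball_subset_zeros open_ball])
  thus "interior {z. counterexample z = 0} \<noteq> {}" by auto
qed (simp_all add: C2_on_plane_counterexample compact_zeros Inf_norm_grad_comp_counterexample_eq_0)

end
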